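(* For every finite set $A$ of positive reals and every integer $\ell\ge0$, \[F^*_\ell(A;t)=\big(F^*_1(A;t)\big)^{\ell}\] as formal power series, where $F^*_\ell(A;t)=\sum_{n\ge0} r_\ell(\mathcal{C}^*_{n,A})\frac{t^n}{n!}$.
   Context: Let $A=\{a_1,\dots,a_m\}$ with $a_1>\dots>a_m>0$. For $n\ge1$, the semiorder-type arrangement $\mathcal{C}^*_{n,A}$ is the arrangement in $\mathbb{R}^n$ of hyperplanes $x_i-x_j=a_k$ ($i\ne j$, $1\le k\le m$). Regions are connected components of the complement of the union of the hyperplanes. The level of $X\subseteq\mathbb{R}^n$ is the smallest integer $\ell\ge0$ such that there are a linear subspace $W$ of dimension $\ell$ and $r>0$ with $X\subseteq\{\bm x:\min_{\bm y\in W}\|\bm x-\bm y\|\le r\}$. $r_\ell(\mathcal{A})$ is the number of regions of $\mathcal{A}$ of level $\ell$. Convention: for $n=0$ there is exactly one region, of level $0$. *)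

theory Defs
  imports "HOL-Analysis.Analysis" "HOL-Computational_Algebra.Formal_Power_Series"
begin

text \<open>Points of R^n are represented as functions nat => real vanishing at all
  indices >= n (coordinates x 0, ..., x (n-1)). The topology is the product
  topology on nat => real (Function_Topology), which restricted to this set is the
  Euclidean topology of R^n.\<close>

definition Rn :: "nat \<Rightarrow> (nat \<Rightarrow> real) set" where
  "Rn n = {x. \<forall>i\<ge>n. x i = 0}"

definition edist :: "nat \<Rightarrow> (nat \<Rightarrow> real) \<Rightarrow> (nat \<Rightarrow> real) \<Rightarrow> real" where
  "edist n x y = sqrt (\<Sum>i<n. (x i - y i)^2)"

definition lincomb :: "nat \<Rightarrow> (nat \<Rightarrow> nat \<Rightarrow> real) \<Rightarrow> (nat \<Rightarrow> real) \<Rightarrow> (nat \<Rightarrow> real)" where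
  "lincomb l v c = (\<lambda>i. \<Sum>j<l. c j * v j i)"

definition is_subspace_dim :: "nat \<Rightarrow> nat \<Rightarrow> (nat \<Rightarrow> real) set \<Rightarrow> bool" where
  "is_subspace_dim n l W \<longleftrightarrow>
     (\<exists>v. (\<forall>j<l. v j \<in> Rn n)
        \<and> (\<forall>c. lincomb l v c = (\<lambda>_. 0) \<longrightarrow> (\<forall>j<l. c j = 0))
        \<and> W = range (lincomb l v))"

text \<open>Level of a subset X of R^n: least l such that X lies within distance r
  of some l-dimensional linear subspace W, for some r > 0
  (min over y in W of the distance is attained, so "min <= r" means some y works).\<close>
definition level :: "nat \<Rightarrow> (nat \<Rightarrow> real) set \<Rightarrow> nat" where
  "level n X = (LEAST l. \<exists>W r. is_subspace_dim n l W \<and> r > 0 \<and>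
                   (\<forall>x\<in>X. \<exists>y\<in>W. edist n x y \<le> r))"

definition semiorder_hyperplanes :: "real set \<Rightarrow> nat \<Rightarrow> (nat \<Rightarrow> real) set set" where
  "semiorder_hyperplanes A n =
     {{x \<in> Rn n. x i - x j = a} | i j a. i < n \<and> j < n \<and> i \<noteq> j \<and> a \<in> A}"

definition complement :: "real set \<Rightarrow> nat \<Rightarrow> (nat \<Rightarrow> real) set" where
  "complement A n = Rn n - \<Union>(semiorder_hyperplanes A n)"

definition regions :: "real set \<Rightarrow> nat \<Rightarrow> (nat \<Rightarrow> real) set set" where
  "regions A n = {connected_component_set (complement A n) x | x. x \<in> complement A n}"

definition r_level :: "real set \<Rightarrow> nat \<Rightarrow> nat \<Rightarrow> nat" where
  "r_level A l n = card {R \<in> regions A n. level n R = l}"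

definition Fstar :: "real set \<Rightarrow> nat \<Rightarrow> real fps" where
  "Fstar A l = Abs_fps (\<lambda>n. of_nat (r_level A l n) / fact n)"

end

theory Submission
  imports Defs
begin

text \<open>Let \<open>b\<close> be the largest element of \<open>A\<close>. For a point \<open>x\<close> off the hyperplanes, the top block
  of a set \<open>I\<close> of coordinates is the least nonempty \<open>U \<subseteq> I\<close> whose coordinates all exceed those
  of \<open>I - U\<close> by more than \<open>b\<close>; peeling off top blocks repeatedly cuts the coordinates into
  blocks. The region of \<open>x\<close> is the set of points with the same pattern of comparisons
  \<open>x i - x j > a\<close>, so the blocks are an invariant of the region, and its level is the number
  of blocks: within a block the values climb in steps of at most \<open>b\<close>, so the region stays
  within bounded distance of the span of the block indicators, while it contains every
  point obtained from \<open>x\<close> by pushing the lowest blocks further down, which excludes all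
  subspaces of smaller dimension. Splitting off the top block is a bijection between the
  regions in dimension \<open>n\<close> with \<open>l + 1\<close> blocks and the triples formed by a set \<open>S\<close> of
  coordinates, a one-block region on \<open>S\<close> and an \<open>l\<close>-block region on the rest. Hence
  \<open>r_level A (l + 1) n = (\<Sum>k\<le>n. (n choose k) * r_level A 1 k * r_level A l (n - k))\<close>,
  which is the coefficient recursion of \<open>Fstar A 1 * Fstar A l\<close>.\<close>

lemma egf_mult:
  fixes f g :: "nat \<Rightarrow> 'a::field_char_0"
  shows "Abs_fps (\<lambda>n. f n / fact n) * Abs_fps (\<lambda>n. g n / fact n)
    = Abs_fps (\<lambda>n. (\<Sum>k\<le>n. of_nat (n choose k) * f k * g (n - k)) / fact n)"
proof (rule fps_ext)
  fix n
  have coeff: "f k / fact k * (g (n - k) / fact (n - k)) = of_nat (n choose k) * f k * g (n - k) / fact n"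
    if "k \<le> n" for k
  proof -
    have "(fact n :: 'a) \<noteq> 0" by simp
    then have "of_nat (n choose k) * f k * g (n - k) / fact n
        = f k * g (n - k) / (fact k * fact (n - k))"
      by (simp add: binomial_fact[OF that])
    then show ?thesis by simp
  qed
  have "fps_nth (Abs_fps (\<lambda>n. f n / fact n) * Abs_fps (\<lambda>n. g n / fact n)) n
      = (\<Sum>k\<le>n. f k / fact k * (g (n - k) / fact (n - k)))"
    by (simp add: fps_mult_nth atLeast0AtMost)
  also have "\<dots> = (\<Sum>k\<le>n. of_nat (n choose k) * f k * g (n - k) / fact n)"
    by (rule sum.cong[OF refl], rule coeff) simp
  finally show "fps_nth (Abs_fps (\<lambda>n. f n / fact n) * Abs_fps (\<lambda>n. g n / fact n)) n
      = fps_nth (Abs_fps (\<lambda>n. (\<Sum>k\<le>n. of_nat (n choose k) * f k * g (n - k)) / fact n)) n"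
    by (simp add: sum_divide_distrib)
qed

lemma diff_le_card_mult_of_small_steps:
  fixes z :: "'a \<Rightarrow> real" and b :: real
  assumes fin: "finite G" and b: "b \<ge> 0" and i: "i \<in> G"
    and step: "\<And>i. i \<in> G \<Longrightarrow> z j < z i \<Longrightarrow> \<exists>k\<in>G. z k < z i \<and> z i - z k \<le> b"
  shows "z i - z j \<le> card G * b"
proof -
  let ?N = "\<lambda>i. {k \<in> G. z j < z k \<and> z k \<le> z i}"
  have "z i - z j \<le> card (?N i) * b" if "i \<in> G" for i
    using that
  proof (induction "card (?N i)" arbitrary: i rule: less_induct)
    case less
    show ?case
    proof (cases "z j < z i")
      case False
      moreover have "0 \<le> real (card (?N i)) * b" using b by simp
      ultimately show ?thesis by linarith
    next
      case True
      then obtain k where k: "k \<in> G" "z k < z i" "z i - z k \<le> b" using step less.prems by blast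
      have "i \<in> ?N i" using True less.prems by simp
      moreover have "i \<notin> ?N k" "?N k \<subseteq> ?N i" using k(2) by auto
      ultimately have "?N k \<subset> ?N i" by blast
      then have card: "card (?N k) < card (?N i)" by (rule psubset_card_mono[rotated]) (use fin in simp)
      show ?thesis
      proof (cases "z j < z k")
        case True
        have "z k - z j \<le> card (?N k) * b" using less.hyps[OF card k(1)] .
        moreover have "(real (card (?N k)) + 1) * b \<le> card (?N i) * b"
          using card b by (intro mult_right_mono) linarith+
        ultimately show ?thesis using k(3) by (simp add: algebra_simps)
      next
        case False
        have "1 \<le> card (?N i)" using card by linarith
        then have "1 * b \<le> card (?N i) * b" using b by (intro mult_right_mono) simp_all
        then show ?thesis using False k(3) by simp
      qed
    qed
  qed
  moreover have "card (?N i) \<le> card G" using fin by (intro card_mono) auto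
  then have "real (card (?N i)) * b \<le> card G * b" using b by (simp add: mult_right_mono)
  ultimately show ?thesis using i by (meson order_trans)
qed

lemma homogeneous_system_nonzero_solution:
  fixes a :: "nat \<Rightarrow> nat \<Rightarrow> real"
  assumes "finite J" "l < card J"
  shows "\<exists>c. (\<exists>j\<in>J. c j \<noteq> 0) \<and> (\<forall>i<l. (\<Sum>j\<in>J. a i j * c j) = 0)"
  using assms
proof (induction l arbitrary: J a)
  case 0
  then have "J \<noteq> {}" by auto
  then show ?case by (intro exI[of _ "\<lambda>_. 1"]) auto
next
  case (Suc l)
  show ?case
  proof (cases "\<forall>j\<in>J. a l j = 0")
    case True
    obtain c where c: "\<exists>j\<in>J. c j \<noteq> 0" "\<forall>i<l. (\<Sum>j\<in>J. a i j * c j) = 0"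
      using Suc.IH[OF Suc.prems(1), of a] Suc.prems(2) by auto
    have "\<forall>i<Suc l. (\<Sum>j\<in>J. a i j * c j) = 0"
      using c(2) True by (auto simp: less_Suc_eq)
    then show ?thesis using c(1) by blast
  next
    case False
    then obtain p where p: "p \<in> J" "a l p \<noteq> 0" by blast
    let ?J = "J - {p}"
    \<comment> \<open>eliminate the unknown \<open>c p\<close> using equation \<open>l\<close>\<close>
    define a' where "a' = (\<lambda>i j. a i j - a i p * a l j / a l p)"
    have "l < card ?J" using Suc.prems p(1) by simp
    then obtain d where d: "\<exists>j\<in>?J. d j \<noteq> 0" "\<forall>i<l. (\<Sum>j\<in>?J. a' i j * d j) = 0"
      using Suc.IH[of ?J a'] Suc.prems(1) by blast
    define S where "S = (\<Sum>j\<in>?J. a l j * d j)"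
    define c where "c = d(p := - S / a l p)"
    have sum_c: "(\<Sum>j\<in>J. a i j * c j) = a i p * (- S / a l p) + (\<Sum>j\<in>?J. a i j * d j)" for i
    proof -
      have "(\<Sum>j\<in>J. a i j * c j) = a i p * c p + (\<Sum>j\<in>?J. a i j * c j)"
        using sum.remove[OF Suc.prems(1) p(1)] by blast
      moreover have "(\<Sum>j\<in>?J. a i j * c j) = (\<Sum>j\<in>?J. a i j * d j)"
        by (rule sum.cong) (auto simp: c_def)
      ultimately show ?thesis by (simp add: c_def)
    qed
    have "(\<Sum>j\<in>J. a i j * c j) = 0" if "i < Suc l" for i
    proof (cases "i < l")
      case True
      have "(\<Sum>j\<in>?J. a' i j * d j) = (\<Sum>j\<in>?J. a i j * d j) - a i p / a l p * S"
        unfolding a'_def S_def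
        by (simp add: left_diff_distrib sum_subtractf sum_distrib_left mult.assoc)
      then show ?thesis using d(2) True sum_c[of i] by simp
    next
      case False
      then have "i = l" using that by simp
      then show ?thesis using sum_c[of i] p(2) unfolding S_def by simp
    qed
    moreover have "\<exists>j\<in>J. c j \<noteq> 0" using d(1) unfolding c_def by auto
    ultimately show ?thesis by blast
  qed
qed

lemma bounded_on_ray_imp_zero:
  fixes \<alpha> \<beta> C :: real
  assumes "\<And>s. s \<ge> 0 \<Longrightarrow> \<bar>\<beta> - s * \<alpha>\<bar> \<le> C"
  shows "\<alpha> = 0"
proof (rule ccontr)
  assume "\<alpha> \<noteq> 0"
  define s where "s = (\<bar>C\<bar> + \<bar>\<beta>\<bar> + 1) / \<bar>\<alpha>\<bar>"
  have "s \<ge> 0" unfolding s_def by simp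
  then have "\<bar>\<beta> - s * \<alpha>\<bar> \<le> C" by (rule assms)
  moreover have "\<bar>s * \<alpha>\<bar> = \<bar>C\<bar> + \<bar>\<beta>\<bar> + 1" unfolding s_def using \<open>\<alpha> \<noteq> 0\<close> by (simp add: abs_mult)
  ultimately show False by linarith
qed

definition dot :: "nat \<Rightarrow> (nat \<Rightarrow> real) \<Rightarrow> (nat \<Rightarrow> real) \<Rightarrow> real" where
  "dot n u w = (\<Sum>t<n. u t * w t)"

lemma dot_commute: "dot n u w = dot n w u"
  unfolding dot_def by (simp add: mult.commute)

lemma dot_lincomb: "dot n u (lincomb l v d) = (\<Sum>j<l. d j * dot n u (v j))"
proof -
  have "dot n u (lincomb l v d) = (\<Sum>t<n. \<Sum>j<l. d j * (u t * v j t))"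
    unfolding dot_def lincomb_def by (simp add: sum_distrib_left mult_ac)
  also have "\<dots> = (\<Sum>j<l. \<Sum>t<n. d j * (u t * v j t))" by (rule sum.swap)
  finally show ?thesis by (simp add: dot_def sum_distrib_left)
qed

lemma dot_diff: "dot n u (\<lambda>i. x i - y i) = dot n u x - dot n u y"
  unfolding dot_def by (simp add: right_diff_distrib sum_subtractf)

lemma dot_scale: "dot n u (\<lambda>i. s * y i) = s * dot n u y"
  unfolding dot_def by (simp add: sum_distrib_left mult.left_commute)

lemma dot_self_eq_0: "dot n u u = 0 \<Longrightarrow> t < n \<Longrightarrow> u t = 0"
  unfolding dot_def by (subst (asm) sum_nonneg_eq_0_iff) auto

lemma coord_le_edist: "t < n \<Longrightarrow> \<bar>z t - w t\<bar> \<le> edist n z w"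
proof -
  assume "t < n"
  then have "(z t - w t)^2 \<le> (\<Sum>i<n. (z i - w i)^2)"
    by (intro member_le_sum) auto
  then have "sqrt ((z t - w t)^2) \<le> sqrt (\<Sum>i<n. (z i - w i)^2)" by (rule real_sqrt_le_mono)
  then show ?thesis unfolding edist_def by simp
qed

lemma abs_dot_diff_le: "\<bar>dot n u z - dot n u w\<bar> \<le> (\<Sum>t<n. \<bar>u t\<bar>) * edist n z w"
proof -
  have "\<bar>dot n u z - dot n u w\<bar> = \<bar>\<Sum>t<n. u t * (z t - w t)\<bar>"
    unfolding dot_def by (simp add: sum_subtractf right_diff_distrib)
  also have "\<dots> \<le> (\<Sum>t<n. \<bar>u t\<bar> * edist n z w)"
    by (rule order_trans[OF sum_abs sum_mono])
      (simp add: abs_mult coord_le_edist mult_left_mono)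
  finally show ?thesis by (simp add: sum_distrib_right)
qed

lemma convex_combination_same_side:
  fixes d1 d2 a t :: real
  assumes "0 \<le> t" "t \<le> 1" "d1 \<noteq> a" "d2 \<noteq> a" "d1 > a \<longleftrightarrow> d2 > a"
  shows "((1 - t) * d1 + t * d2 > a \<longleftrightarrow> d1 > a) \<and> (1 - t) * d1 + t * d2 \<noteq> a"
proof (cases "d1 > a")
  case True
  then have "(1 - t) * - d1 + t * - d2 < - a"
    using assms by (intro convex_bound_lt) auto
  then show ?thesis using True by (simp add: algebra_simps)
next
  case False
  then have "(1 - t) * d1 + t * d2 < a"
    using assms by (intro convex_bound_lt) auto
  then show ?thesis using False by simp
qed

locale semiorder_data =
  fixes A :: "real set" and b :: real
  assumes finite_A: "finite A" and b_in_A: "b \<in> A"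
    and A_bounds: "\<And>a. a \<in> A \<Longrightarrow> 0 < a \<and> a \<le> b"
begin

lemma b_pos: "b > 0"
  using A_bounds b_in_A by auto

definition generic :: "nat set \<Rightarrow> (nat \<Rightarrow> real) \<Rightarrow> bool" where
  "generic I x \<longleftrightarrow> (\<forall>i\<in>I. \<forall>j\<in>I. i \<noteq> j \<longrightarrow> x i - x j \<notin> A)"

definition pattern :: "nat set \<Rightarrow> (nat \<Rightarrow> real) \<Rightarrow> (nat \<times> nat \<times> real) set" where
  "pattern I x = {(i, j, a). i \<in> I \<and> j \<in> I \<and> i \<noteq> j \<and> a \<in> A \<and> x i - x j > a}"

definition separated :: "(nat \<Rightarrow> real) \<Rightarrow> nat set \<Rightarrow> nat set \<Rightarrow> bool" where
  "separated x I U \<longleftrightarrow> (\<forall>i\<in>U. \<forall>j\<in>I - U. x i - x j > b)"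

definition top_block :: "(nat \<Rightarrow> real) \<Rightarrow> nat set \<Rightarrow> nat set" where
  "top_block x I = \<Inter>{U. U \<subseteq> I \<and> U \<noteq> {} \<and> separated x I U}"

fun remaining :: "(nat \<Rightarrow> real) \<Rightarrow> nat set \<Rightarrow> nat \<Rightarrow> nat set" where
  "remaining x I 0 = I"
| "remaining x I (Suc m) = remaining x I m - top_block x (remaining x I m)"

definition num_blocks :: "(nat \<Rightarrow> real) \<Rightarrow> nat set \<Rightarrow> nat" where
  "num_blocks x I = (LEAST m. remaining x I m = {})"

lemma separated_chain:
  assumes "separated x I U" "separated x I V" "U \<subseteq> I" "V \<subseteq> I"
  shows "U \<subseteq> V \<or> V \<subseteq> U"
proof (rule ccontr)
  assume "\<not> ?thesis"
  then obtain u v where "u \<in> U" "u \<notin> V" "v \<in> V" "v \<notin> U" by blast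
  with assms have "x u - x v > b" "x v - x u > b" unfolding separated_def by auto
  with b_pos show False by linarith
qed

lemma top_block_props:
  assumes "finite I" "I \<noteq> {}"
  shows "top_block x I \<subseteq> I" "top_block x I \<noteq> {}" "separated x I (top_block x I)"
    "\<And>U. U \<subseteq> I \<Longrightarrow> U \<noteq> {} \<Longrightarrow> separated x I U \<Longrightarrow> top_block x I \<subseteq> U"
proof -
  let ?F = "{U. U \<subseteq> I \<and> U \<noteq> {} \<and> separated x I U}"
  have "I \<in> ?F" using assms(2) by (auto simp: separated_def)
  then obtain U0 where U0: "U0 \<in> ?F" "\<And>V. V \<in> ?F \<Longrightarrow> card U0 \<le> card V"
    using ex_has_least_nat[of "\<lambda>U. U \<in> ?F" I card] by blast
  \<comment> \<open>separated sets form a chain, so the one of least cardinality is the least one\<close>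
  have least: "U0 \<subseteq> V" if "V \<in> ?F" for V
  proof -
    have "finite U0" using U0(1) assms(1) by (auto intro: finite_subset)
    then have "V \<subseteq> U0 \<Longrightarrow> V = U0" using card_seteq U0(2)[OF that] by blast
    then show ?thesis using separated_chain[of x I U0 V] U0(1) that by auto
  qed
  have "top_block x I = U0" unfolding top_block_def using least U0(1) by blast
  then show "top_block x I \<subseteq> I" "top_block x I \<noteq> {}" "separated x I (top_block x I)"
    "\<And>U. U \<subseteq> I \<Longrightarrow> U \<noteq> {} \<Longrightarrow> separated x I U \<Longrightarrow> top_block x I \<subseteq> U"
    using U0(1) least by auto
qed

lemmas top_block_subset = top_block_props(1)
  and top_block_nonempty = top_block_props(2)
  and separated_top_block = top_block_props(3)
  and top_block_least = top_block_props(4)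

lemma top_block_eqI:
  assumes "finite I" "T \<subseteq> I" "T \<noteq> {}" "separated x I T"
    and "\<And>U. U \<subseteq> I \<Longrightarrow> U \<noteq> {} \<Longrightarrow> separated x I U \<Longrightarrow> T \<subseteq> U"
  shows "top_block x I = T"
proof -
  have "I \<noteq> {}" using assms(2,3) by blast
  then show ?thesis
    using assms top_block_props[OF assms(1)] by (meson subset_antisym)
qed

lemma top_block_idem:
  assumes "finite I" "I \<noteq> {}"
  shows "top_block x (top_block x I) = top_block x I"
proof -
  let ?T = "top_block x I"
  note T = top_block_props[OF assms, where x = x]
  show ?thesis
  proof (rule top_block_eqI)
    show "finite ?T" using T(1) assms(1) by (rule finite_subset)
    show "separated x ?T ?T" unfolding separated_def by simp
    fix U assume U: "U \<subseteq> ?T" "U \<noteq> {}" "separated x ?T U"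
    have "separated x I U"
      using U(1,3) T(3) unfolding separated_def by (metis Diff_iff subsetD)
    then show "?T \<subseteq> U" using T(1,4) U by blast
  qed (use T in auto)
qed

lemma top_block_eq_separated:
  assumes fin: "finite I" and SI: "S \<subseteq> I" and "S \<noteq> {}" and sep: "separated x I S"
    and top_S: "top_block x S = S"
  shows "top_block x I = S"
proof -
  have ne: "I \<noteq> {}" using SI \<open>S \<noteq> {}\<close> by blast
  note T = top_block_props[OF fin ne, where x = x]
  have TS: "top_block x I \<subseteq> S" using T(4)[OF SI \<open>S \<noteq> {}\<close> sep] .
  then have "separated x S (top_block x I)" using T(3) SI unfolding separated_def by blast
  then have "top_block x S \<subseteq> top_block x I"
    by (rule top_block_least[OF finite_subset[OF SI fin] \<open>S \<noteq> {}\<close> TS T(2)])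
  then show ?thesis using TS top_S by blast
qed

lemma remaining_subset: "remaining x I m \<subseteq> I"
  by (induction m) auto

lemma remaining_antimono: "m \<le> m' \<Longrightarrow> remaining x I m' \<subseteq> remaining x I m"
  by (induction m' rule: dec_induct) auto

lemma finite_remaining: "finite I \<Longrightarrow> finite (remaining x I m)"
  using remaining_subset by (rule finite_subset)

lemma card_remaining_le: "finite I \<Longrightarrow> card (remaining x I m) \<le> card I - m"
proof (induction m)
  case (Suc m)
  let ?R = "remaining x I m"
  show ?case
  proof (cases "?R = {}")
    case False
    then have "remaining x I (Suc m) \<subset> ?R"
      using top_block_props[OF finite_remaining[OF Suc.prems] False, where x = x] by auto
    then have "card (remaining x I (Suc m)) < card ?R"
      by (rule psubset_card_mono[rotated]) (rule finite_remaining[OF Suc.prems])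
    then show ?thesis using Suc by linarith
  qed simp
qed simp

lemma remaining_card_eq_empty: "finite I \<Longrightarrow> remaining x I (card I) = {}"
  using card_remaining_le[of I x "card I"] finite_remaining[of I x "card I"] by simp

lemma remaining_Suc_shift: "remaining x I (Suc m) = remaining x (I - top_block x I) m"
  by (induction m) auto

lemma above_remaining:
  assumes "finite I" "i \<in> I - remaining x I m" "j \<in> remaining x I m"
  shows "x i - x j > b"
  using assms(2,3)
proof (induction m arbitrary: i j)
  case (Suc m)
  let ?R = "remaining x I m"
  show ?case
  proof (cases "i \<in> ?R")
    case True
    then have "?R \<noteq> {}" "i \<in> top_block x ?R" "j \<in> ?R - top_block x ?R" using Suc.prems by auto
    then show ?thesis
      using separated_top_block[OF finite_remaining[OF assms(1)]] unfolding separated_def by blast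
  next
    case False
    then show ?thesis using Suc by auto
  qed
qed simp

lemma remaining_num_blocks: "finite I \<Longrightarrow> remaining x I (num_blocks x I) = {}"
  unfolding num_blocks_def by (rule LeastI) (rule remaining_card_eq_empty)

lemma remaining_nonempty: "m < num_blocks x I \<Longrightarrow> remaining x I m \<noteq> {}"
  unfolding num_blocks_def by (rule not_less_Least)

lemma num_blocks_empty [simp]: "num_blocks x {} = 0"
  unfolding num_blocks_def by simp

lemma num_blocks_eq_0_iff: "finite I \<Longrightarrow> num_blocks x I = 0 \<longleftrightarrow> I = {}"
  using remaining_num_blocks[of I x] by force

lemma num_blocks_nonempty:
  assumes "finite I" "I \<noteq> {}"
  shows "num_blocks x I = Suc (num_blocks x (I - top_block x I))"
  unfolding num_blocks_def remaining_Suc_shift[symmetric]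
  using remaining_card_eq_empty[OF assms(1)] assms(2) by (intro Least_Suc) auto

lemma num_blocks_eq_1_iff:
  assumes "finite I"
  shows "num_blocks x I = 1 \<longleftrightarrow> I \<noteq> {} \<and> top_block x I = I"
proof (cases "I = {}")
  case False
  then show ?thesis
    using num_blocks_nonempty[OF assms False] num_blocks_eq_0_iff[of "I - top_block x I" x]
      top_block_subset[OF assms False, of x] assms by auto
qed simp

lemma pattern_cong: "(\<And>i. i \<in> I \<Longrightarrow> x i = y i) \<Longrightarrow> pattern I x = pattern I y"
  unfolding pattern_def by auto

lemma pattern_eqD:
  "pattern I x = pattern I y \<Longrightarrow> i \<in> I \<Longrightarrow> j \<in> I \<Longrightarrow> i \<noteq> j \<Longrightarrow> a \<in> A
    \<Longrightarrow> x i - x j > a \<longleftrightarrow> y i - y j > a"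
  unfolding pattern_def by (auto simp: set_eq_iff)

lemma generic_mono: "J \<subseteq> I \<Longrightarrow> generic I x \<Longrightarrow> generic J x"
  unfolding generic_def by blast

lemma separated_cong_pattern:
  assumes "pattern I x = pattern I y" "J \<subseteq> I" "U \<subseteq> J"
  shows "separated x J U = separated y J U"
proof -
  have "x i - x j > b \<longleftrightarrow> y i - y j > b" if "i \<in> U" "j \<in> J - U" for i j
    using pattern_eqD[OF assms(1), of i j b] b_in_A assms(2,3) that by auto
  then show ?thesis unfolding separated_def by auto
qed

lemma top_block_cong_pattern:
  "pattern I x = pattern I y \<Longrightarrow> J \<subseteq> I \<Longrightarrow> top_block x J = top_block y J"
proof -
  assume "pattern I x = pattern I y" "J \<subseteq> I"
  then have "{U. U \<subseteq> J \<and> U \<noteq> {} \<and> separated x J U} = {U. U \<subseteq> J \<and> U \<noteq> {} \<and> separated y J U}"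
    using separated_cong_pattern by blast
  then show ?thesis unfolding top_block_def by simp
qed

lemma remaining_cong_pattern:
  assumes "pattern I x = pattern I y"
  shows "remaining x I m = remaining y I m"
proof (induction m)
  case (Suc m)
  then show ?case using top_block_cong_pattern[OF assms remaining_subset, of y m] by simp
qed simp

lemma num_blocks_cong_pattern:
  assumes "pattern I x = pattern I y"
  shows "num_blocks x I = num_blocks y I"
  unfolding num_blocks_def remaining_cong_pattern[OF assms] ..

lemma separated_comp:
  assumes "inj_on h J" "U \<subseteq> J"
  shows "separated (x \<circ> h) J U \<longleftrightarrow> separated x (h ` J) (h ` U)"
proof -
  have "h ` J - h ` U = h ` (J - U)" using assms by (simp add: inj_on_image_set_diff)
  then show ?thesis unfolding separated_def by auto
qed

lemma top_block_comp:
  assumes inj: "inj_on h J" and fin: "finite J" and ne: "J \<noteq> {}"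
  shows "h ` top_block (x \<circ> h) J = top_block x (h ` J)"
proof -
  note T = top_block_props[OF fin ne, where x = "x \<circ> h"]
  show ?thesis
  proof (rule sym, rule top_block_eqI)
    show "separated x (h ` J) (h ` top_block (x \<circ> h) J)"
      using separated_comp[OF inj T(1)] T(3) by simp
    fix V assume V: "V \<subseteq> h ` J" "V \<noteq> {}" "separated x (h ` J) V"
    define U where "U = {j \<in> J. h j \<in> V}"
    have hU: "h ` U = V" using V(1) unfolding U_def by blast
    then have "U \<subseteq> J" "U \<noteq> {}" "separated (x \<circ> h) J U"
      using V(2,3) separated_comp[OF inj, of U] unfolding U_def by auto
    then show "h ` top_block (x \<circ> h) J \<subseteq> V" using T(4) hU by blast
  qed (use fin T in auto)
qed

lemma remaining_comp:
  assumes inj: "inj_on h J" and fin: "finite J"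
  shows "h ` remaining (x \<circ> h) J m = remaining x (h ` J) m"
proof (induction m)
  case (Suc m)
  let ?R = "remaining (x \<circ> h) J m"
  have RJ: "?R \<subseteq> J" by (rule remaining_subset)
  show ?case
  proof (cases "?R = {}")
    case True
    then show ?thesis using Suc by (simp add: comp_def)
  next
    case False
    have inj_R: "inj_on h ?R" using inj RJ by (rule inj_on_subset)
    have "h ` (?R - top_block (x \<circ> h) ?R) = h ` ?R - h ` top_block (x \<circ> h) ?R"
      using inj_on_image_set_diff[OF inj_R] top_block_subset[OF finite_remaining[OF fin] False] by blast
    also have "\<dots> = remaining x (h ` J) m - top_block x (remaining x (h ` J) m)"
      by (simp only: top_block_comp[OF inj_R finite_remaining[OF fin] False] Suc.IH)
    finally show ?thesis by (simp only: remaining.simps)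
  qed
qed simp

lemma num_blocks_comp:
  assumes "inj_on h J" "finite J"
  shows "num_blocks (x \<circ> h) J = num_blocks x (h ` J)"
  unfolding num_blocks_def remaining_comp[OF assms, of x, symmetric] by simp

lemma generic_comp: "inj_on h J \<Longrightarrow> generic J (x \<circ> h) \<longleftrightarrow> generic (h ` J) x"
  unfolding generic_def inj_on_def by auto

lemma pattern_comp:
  assumes "inj_on h J"
  shows "(\<lambda>(i, j, a). (h i, h j, a)) ` pattern J (x \<circ> h) = pattern (h ` J) x"
proof (intro equalityI subsetI)
  fix w assume "w \<in> pattern (h ` J) x"
  then obtain i j a where "w = (h i, h j, a)" "i \<in> J" "j \<in> J" "h i \<noteq> h j" "a \<in> A" "x (h i) - x (h j) > a"
    unfolding pattern_def by auto
  then show "w \<in> (\<lambda>(i, j, a). (h i, h j, a)) ` pattern J (x \<circ> h)"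
    unfolding pattern_def by (auto intro!: image_eqI[where x = "(i, j, a)"])
next
  fix w assume "w \<in> (\<lambda>(i, j, a). (h i, h j, a)) ` pattern J (x \<circ> h)"
  then obtain i j a where "w = (h i, h j, a)" "(i, j, a) \<in> pattern J (x \<circ> h)" by auto
  then show "w \<in> pattern (h ` J) x" using assms unfolding pattern_def inj_on_def by auto
qed

definition patterns :: "nat set \<Rightarrow> nat \<Rightarrow> (nat \<times> nat \<times> real) set set" where
  "patterns I l = {pattern I x | x. generic I x \<and> num_blocks x I = l}"

lemma finite_patterns: "finite I \<Longrightarrow> finite (patterns I l)"
  by (rule finite_subset[of _ "Pow (I \<times> I \<times> A)"]) (auto simp: patterns_def pattern_def finite_A)

lemma card_patterns_image:
  assumes inj: "inj_on h J" and fin: "finite J"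
  shows "card (patterns (h ` J) l) = card (patterns J l)"
proof -
  let ?f = "\<lambda>(i, j, a). (h i, h j, a :: real)"
  have "patterns (h ` J) l = image ?f ` patterns J l"
  proof (intro equalityI subsetI)
    fix p assume "p \<in> patterns (h ` J) l"
    then obtain x where x: "p = pattern (h ` J) x" "generic (h ` J) x" "num_blocks x (h ` J) = l"
      unfolding patterns_def by blast
    then have "pattern J (x \<circ> h) \<in> patterns J l"
      unfolding patterns_def using generic_comp[OF inj] num_blocks_comp[OF inj fin] by blast
    then show "p \<in> image ?f ` patterns J l" using pattern_comp[OF inj, of x] x(1) by blast
  next
    fix p assume "p \<in> image ?f ` patterns J l"
    then obtain y where y: "p = ?f ` pattern J y" "generic J y" "num_blocks y J = l"
      unfolding patterns_def by blast
    define x where "x = y \<circ> inv_into J h"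
    have xy: "(x \<circ> h) j = y j" if "j \<in> J" for j
      unfolding x_def using inv_into_f_f[OF inj that] by simp
    then have pxy: "pattern J (x \<circ> h) = pattern J y" by (rule pattern_cong)
    have "generic J (x \<circ> h)" using y(2) xy unfolding generic_def by simp
    moreover have "num_blocks (x \<circ> h) J = l" using num_blocks_cong_pattern[OF pxy] y(3) by simp
    moreover have "p = pattern (h ` J) x" using y(1) pxy pattern_comp[OF inj, of x] by simp
    ultimately show "p \<in> patterns (h ` J) l"
      unfolding patterns_def generic_comp[OF inj] num_blocks_comp[OF inj fin] by blast
  qed
  moreover have "inj_on (image ?f) (patterns J l)"
  proof (rule inj_on_subset[OF inj_on_image_Pow])
    show "inj_on ?f (J \<times> J \<times> A)" using inj unfolding inj_on_def by auto
    show "patterns J l \<subseteq> Pow (J \<times> J \<times> A)" unfolding patterns_def pattern_def by auto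
  qed
  ultimately show ?thesis by (simp add: card_image)
qed

definition num_patterns :: "nat \<Rightarrow> nat \<Rightarrow> nat" where
  "num_patterns l n = card (patterns {..<n} l)"

lemma card_patterns: "finite S \<Longrightarrow> card (patterns S l) = num_patterns l (card S)"
proof -
  assume "finite S"
  then obtain h where "bij_betw h {..<card S} S"
    using ex_bij_betw_nat_finite[of S] by (auto simp: atLeast0LessThan)
  then have "inj_on h {..<card S}" "h ` {..<card S} = S" by (simp_all add: bij_betw_def)
  then show ?thesis
    unfolding num_patterns_def using card_patterns_image[of h "{..<card S}" l] by simp
qed

definition restrict_pattern :: "nat set \<Rightarrow> (nat \<times> nat \<times> real) set \<Rightarrow> (nat \<times> nat \<times> real) set" where
  "restrict_pattern J p = {(i, j, a) \<in> p. i \<in> J \<and> j \<in> J}"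

lemma restrict_pattern_pattern: "J \<subseteq> I \<Longrightarrow> restrict_pattern J (pattern I x) = pattern J x"
  unfolding restrict_pattern_def pattern_def by auto

definition pattern_top_block :: "nat set \<Rightarrow> (nat \<times> nat \<times> real) set \<Rightarrow> nat set" where
  "pattern_top_block I p = top_block (SOME x. generic I x \<and> pattern I x = p) I"

lemma pattern_top_block_pattern: "generic I x \<Longrightarrow> pattern_top_block I (pattern I x) = top_block x I"
proof -
  assume "generic I x"
  then have "pattern I (SOME y. generic I y \<and> pattern I y = pattern I x) = pattern I x"
    by (metis (mono_tags, lifting) someI)
  then show ?thesis unfolding pattern_top_block_def by (rule top_block_cong_pattern) simp
qed

text \<open>Every comparison between the top block and the rest is forced, so a pattern is
  determined by its top block and its restrictions to both parts.\<close>

lemma mem_pattern_split: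
  assumes "finite I" "I \<noteq> {}" "i \<in> I" "j \<in> I"
  shows "(i, j, a) \<in> pattern I x \<longleftrightarrow>
     (i, j, a) \<in> restrict_pattern (I - top_block x I) (pattern I x)
     \<or> (i, j, a) \<in> restrict_pattern (top_block x I) (pattern I x)
     \<or> (i \<in> top_block x I \<and> j \<notin> top_block x I \<and> a \<in> A)"
proof -
  let ?T = "top_block x I"
  have sep: "x i' - x j' > b" if "i' \<in> ?T" "j' \<in> I - ?T" for i' j'
    using separated_top_block[OF assms(1,2)] that unfolding separated_def by blast
  consider "i \<in> ?T \<longleftrightarrow> j \<in> ?T" | "i \<in> ?T" "j \<notin> ?T" | "j \<in> ?T" "i \<notin> ?T" by blast
  then show ?thesis
  proof cases
    case 1
    then show ?thesis using assms unfolding restrict_pattern_def by auto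
  next
    case 2
    then show ?thesis using sep[of i j] A_bounds[of a] assms unfolding pattern_def restrict_pattern_def by auto
  next
    case 3
    then show ?thesis using sep[of j i] A_bounds[of a] assms unfolding pattern_def restrict_pattern_def by auto
  qed
qed

definition split_pattern :: "nat set \<Rightarrow> (nat \<times> nat \<times> real) set
    \<Rightarrow> nat set \<times> (nat \<times> nat \<times> real) set \<times> (nat \<times> nat \<times> real) set" where
  "split_pattern I p =
    (pattern_top_block I p, restrict_pattern (I - pattern_top_block I p) p,
     restrict_pattern (pattern_top_block I p) p)"

lemma split_pattern_pattern:
  "generic I x \<Longrightarrow> finite I \<Longrightarrow> I \<noteq> {} \<Longrightarrow>
    split_pattern I (pattern I x) = (top_block x I, pattern (I - top_block x I) x, pattern (top_block x I) x)"
  unfolding split_pattern_def pattern_top_block_pattern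
  by (simp add: restrict_pattern_pattern top_block_subset Diff_subset)

lemma ex_glued_point:
  assumes fin: "finite I" and SI: "S \<subseteq> I" and "S \<noteq> {}"
    and y: "generic (I - S) y" and z: "generic S z" "top_block z S = S"
  obtains x where "generic I x" "\<And>i. i \<in> I - S \<Longrightarrow> x i = y i" "pattern S x = pattern S z"
    "top_block x I = S"
proof -
  \<comment> \<open>lift \<open>z\<close> on \<open>S\<close> high above \<open>y\<close> on \<open>I - S\<close>\<close>
  define C where "C = b + 1 + (\<Sum>i\<in>I. \<bar>y i\<bar>) + (\<Sum>i\<in>I. \<bar>z i\<bar>)"
  define x where "x = (\<lambda>i. if i \<in> S then z i + C else y i)"
  have big: "x i - x j > b" if "i \<in> S" "j \<in> I - S" for i j
  proof -
    have "\<bar>z i\<bar> \<le> (\<Sum>i\<in>I. \<bar>z i\<bar>)" "\<bar>y j\<bar> \<le> (\<Sum>i\<in>I. \<bar>y i\<bar>)"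
      using that SI fin by (auto intro: member_le_sum)
    then show ?thesis using that unfolding x_def C_def by auto
  qed
  then have sepS: "separated x I S" unfolding separated_def by blast
  have "generic I x" unfolding generic_def
  proof (intro ballI impI)
    fix i j assume ij: "i \<in> I" "j \<in> I" "i \<noteq> j"
    consider "i \<in> S" "j \<in> S" | "i \<notin> S" "j \<notin> S" | "i \<in> S" "j \<notin> S" | "i \<notin> S" "j \<in> S" by blast
    then show "x i - x j \<notin> A"
    proof cases
      case 1 then show ?thesis using z(1) ij unfolding generic_def x_def by auto
    next
      case 2 then show ?thesis using y ij unfolding generic_def x_def by auto
    next
      case 3 then show ?thesis using big[of i j] ij A_bounds by force
    next
      case 4 then show ?thesis using big[of j i] ij A_bounds b_pos by force
    qed
  qed
  moreover have patS: "pattern S x = pattern S z" unfolding pattern_def x_def by auto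
  moreover have "top_block x I = S"
    using top_block_eq_separated[OF fin SI \<open>S \<noteq> {}\<close> sepS] top_block_cong_pattern[OF patS order_refl] z(2)
    by simp
  ultimately show ?thesis using that unfolding x_def by auto
qed

lemma inj_on_split_pattern:
  assumes fin: "finite I"
  shows "inj_on (split_pattern I) (patterns I (Suc l))"
proof (rule inj_onI)
  fix p p' assume "p \<in> patterns I (Suc l)" "p' \<in> patterns I (Suc l)"
    and eq: "split_pattern I p = split_pattern I p'"
  then obtain x x' where x: "p = pattern I x" "generic I x" "num_blocks x I = Suc l"
    and x': "p' = pattern I x'" "generic I x'" "num_blocks x' I = Suc l"
    unfolding patterns_def by blast
  have ne: "I \<noteq> {}" using x(3) by auto
  have T: "top_block x I = top_block x' I"
    and R1: "restrict_pattern (I - top_block x I) p = restrict_pattern (I - top_block x I) p'"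
    and R2: "restrict_pattern (top_block x I) p = restrict_pattern (top_block x I) p'"
    using eq unfolding split_pattern_def x(1) x'(1) pattern_top_block_pattern[OF x(2)]
      pattern_top_block_pattern[OF x'(2)] by auto
  show "p = p'"
  proof (rule set_eqI)
    fix w :: "nat \<times> nat \<times> real"
    obtain i j a where w: "w = (i, j, a)" by (cases w)
    show "w \<in> p \<longleftrightarrow> w \<in> p'"
    proof (cases "i \<in> I \<and> j \<in> I")
      case True
      then show ?thesis
        using mem_pattern_split[OF fin ne, of i j a x] mem_pattern_split[OF fin ne, of i j a x'] T R1 R2
        unfolding w x(1) x'(1) by auto
    next
      case False
      then show ?thesis unfolding w x(1) x'(1) pattern_def by auto
    qed
  qed
qed

lemma split_pattern_image:
  assumes fin: "finite I"
  shows "split_pattern I ` patterns I (Suc l) = (SIGMA S:Pow I. patterns (I - S) l \<times> patterns S 1)"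
proof (intro equalityI subsetI)
  fix q assume "q \<in> split_pattern I ` patterns I (Suc l)"
  then obtain x where q: "q = split_pattern I (pattern I x)" and x: "generic I x" "num_blocks x I = Suc l"
    unfolding patterns_def by blast
  have ne: "I \<noteq> {}" using x(2) by auto
  let ?T = "top_block x I"
  have TI: "?T \<subseteq> I" using top_block_subset[OF fin ne] .
  have "pattern (I - ?T) x \<in> patterns (I - ?T) l"
    unfolding patterns_def using generic_mono[OF _ x(1)] x(2) num_blocks_nonempty[OF fin ne] by auto
  moreover have "pattern ?T x \<in> patterns ?T 1"
    unfolding patterns_def using generic_mono[OF TI x(1)] num_blocks_eq_1_iff[OF finite_subset[OF TI fin]]
      top_block_idem[OF fin ne] top_block_nonempty[OF fin ne] by blast
  ultimately show "q \<in> (SIGMA S:Pow I. patterns (I - S) l \<times> patterns S 1)"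
    unfolding q split_pattern_pattern[OF x(1) fin ne] using TI by auto
next
  fix q assume "q \<in> (SIGMA S:Pow I. patterns (I - S) l \<times> patterns S 1)"
  then obtain S y z where q: "q = (S, pattern (I - S) y, pattern S z)" "S \<subseteq> I"
    and y: "generic (I - S) y" "num_blocks y (I - S) = l"
    and z: "generic S z" "num_blocks z S = 1"
    unfolding patterns_def by blast
  have finS: "finite S" using q(2) fin by (rule finite_subset)
  have zS: "S \<noteq> {}" "top_block z S = S" using z(2) num_blocks_eq_1_iff[OF finS] by auto
  obtain x where x: "generic I x" "\<And>i. i \<in> I - S \<Longrightarrow> x i = y i" "pattern S x = pattern S z"
    "top_block x I = S"
    using ex_glued_point[OF fin q(2) zS(1) y(1) z(1) zS(2)] by blast
  have ne: "I \<noteq> {}" using q(2) zS(1) by blast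
  have pxy: "pattern (I - S) x = pattern (I - S) y" using x(2) by (rule pattern_cong)
  then have "num_blocks x I = Suc l"
    using num_blocks_nonempty[OF fin ne, of x] num_blocks_cong_pattern[OF pxy] x(4) y(2) by simp
  then have "pattern I x \<in> patterns I (Suc l)" unfolding patterns_def using x(1) by blast
  moreover have "q = split_pattern I (pattern I x)"
    unfolding split_pattern_pattern[OF x(1) fin ne] x(4) pxy x(3) q(1) ..
  ultimately show "q \<in> split_pattern I ` patterns I (Suc l)" by (rule rev_image_eqI)
qed

lemma card_patterns_Suc:
  assumes fin: "finite I"
  shows "card (patterns I (Suc l)) = (\<Sum>S\<in>Pow I. card (patterns (I - S) l) * card (patterns S 1))"
proof -
  have "card (patterns I (Suc l)) = card (SIGMA S:Pow I. patterns (I - S) l \<times> patterns S 1)"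
    using card_image[OF inj_on_split_pattern[OF fin]] split_pattern_image[OF fin] by metis
  also have "\<dots> = (\<Sum>S\<in>Pow I. card (patterns (I - S) l \<times> patterns S 1))"
    using fin by (intro card_SigmaI) (auto intro!: finite_cartesian_product finite_patterns intro: finite_subset)
  also have "\<dots> = (\<Sum>S\<in>Pow I. card (patterns (I - S) l) * card (patterns S 1))"
    by (simp add: card_cartesian_product)
  finally show ?thesis .
qed

lemma num_patterns_Suc:
  "num_patterns (Suc l) n = (\<Sum>k\<le>n. (n choose k) * num_patterns 1 k * num_patterns l (n - k))"
proof -
  let ?I = "{..<n}"
  let ?f = "\<lambda>k. num_patterns 1 k * num_patterns l (n - k)"
  have "num_patterns (Suc l) n = (\<Sum>S\<in>Pow ?I. card (patterns (?I - S) l) * card (patterns S 1))"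
    unfolding num_patterns_def by (rule card_patterns_Suc) simp
  also have "\<dots> = (\<Sum>S\<in>Pow ?I. ?f (card S))"
  proof (rule sum.cong[OF refl])
    fix S assume S: "S \<in> Pow ?I"
    then have fS: "finite S" by (auto intro: finite_subset)
    then have "card (?I - S) = n - card S" using S by (simp add: card_Diff_subset)
    then show "card (patterns (?I - S) l) * card (patterns S 1) = ?f (card S)"
      using card_patterns[OF fS] card_patterns[of "?I - S"] by simp
  qed
  also have "\<dots> = (\<Sum>k\<le>n. \<Sum>S | S \<in> Pow ?I \<and> card S = k. ?f (card S))"
    by (rule sum.group[symmetric]) (auto intro: card_mono[of ?I, simplified])
  also have "\<dots> = (\<Sum>k\<le>n. (n choose k) * ?f k)"
    using n_subsets[of ?I] by (simp add: Pow_def)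
  finally show ?thesis by (simp add: mult.assoc)
qed

lemma num_patterns_0: "num_patterns 0 n = (if n = 0 then 1 else 0)"
proof -
  have "patterns {..<n} 0 = (if n = 0 then {{}} else {})"
    unfolding patterns_def using num_blocks_eq_0_iff[of "{..<n}"]
    by (auto simp: generic_def pattern_def)
  then show ?thesis unfolding num_patterns_def by simp
qed

lemma egf_num_patterns:
  "Abs_fps (\<lambda>n. of_nat (num_patterns l n) / fact n :: real)
    = Abs_fps (\<lambda>n. of_nat (num_patterns 1 n) / fact n) ^ l"
proof (induction l)
  case 0
  show ?case by (rule fps_ext) (simp add: num_patterns_0)
next
  case (Suc l)
  then show ?case
    unfolding power_Suc Suc.IH[symmetric] egf_mult num_patterns_Suc by (simp add: mult.assoc)
qed

lemma complement_eq: "complement A n = {x \<in> Rn n. generic {..<n} x}"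
  unfolding complement_def semiorder_hyperplanes_def generic_def by auto

definition cell :: "nat \<Rightarrow> (nat \<Rightarrow> real) \<Rightarrow> (nat \<Rightarrow> real) set" where
  "cell n x = {y \<in> complement A n. pattern {..<n} y = pattern {..<n} x}"

lemma pattern_const_on_connected:
  assumes T: "connected T" "T \<subseteq> complement A n" and xy: "x \<in> T" "y \<in> T"
    and ij: "i < n" "j < n" "i \<noteq> j" and a: "a \<in> A" and gt: "x i - x j > a"
  shows "y i - y j > a"
proof (rule ccontr)
  assume "\<not> ?thesis"
  moreover have "y i - y j \<noteq> a" using xy(2) T(2) ij a unfolding complement_eq generic_def by auto
  ultimately have lt: "y i - y j - a < 0" by linarith
  let ?f = "\<lambda>z::nat \<Rightarrow> real. z i - z j - a"
  have "continuous_on T ?f"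
    by (intro continuous_intros continuous_on_subset[OF continuous_on_product_coordinates]) auto
  then have "connected (?f ` T)" using T(1) by (rule connected_continuous_image)
  moreover have "?f x \<in> ?f ` T" "?f y \<in> ?f ` T" using xy by auto
  ultimately have "0 \<in> ?f ` T" unfolding connected_iff_interval using gt lt
    by (metis (no_types, lifting) diff_gt_0_iff_gt less_eq_real_def)
  then obtain z where "z \<in> T" "z i - z j = a" by auto
  then show False using T(2) ij a unfolding complement_eq generic_def by auto
qed

lemma segment_in_cell:
  assumes y: "y \<in> cell n x" and z: "z \<in> cell n x" and t: "0 \<le> t" "t \<le> 1"
  shows "(\<lambda>i. (1 - t) * y i + t * z i) \<in> cell n x"
proof -
  let ?w = "\<lambda>i. (1 - t) * y i + t * z i"
  have yz: "y \<in> Rn n" "z \<in> Rn n" "generic {..<n} y" "generic {..<n} z"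
    "pattern {..<n} y = pattern {..<n} z"
    using y z unfolding cell_def complement_eq by auto
  have key: "(?w i - ?w j > a \<longleftrightarrow> y i - y j > a) \<and> ?w i - ?w j \<noteq> a"
    if "i < n" "j < n" "i \<noteq> j" "a \<in> A" for i j a
  proof -
    have "?w i - ?w j = (1 - t) * (y i - y j) + t * (z i - z j)" by (simp add: algebra_simps)
    moreover have "y i - y j \<noteq> a" "z i - z j \<noteq> a" using yz(3,4) that unfolding generic_def by auto
    ultimately show ?thesis
      using convex_combination_same_side[OF t] pattern_eqD[OF yz(5)] that by simp
  qed
  have "?w \<in> Rn n" using yz(1,2) unfolding Rn_def by simp
  moreover have "generic {..<n} ?w" using key unfolding generic_def by blast
  moreover have "pattern {..<n} ?w = pattern {..<n} y" using key unfolding pattern_def by auto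
  ultimately show ?thesis using y unfolding cell_def complement_eq by auto
qed

lemma connected_component_complement_eq_cell:
  assumes x: "x \<in> complement A n"
  shows "connected_component_set (complement A n) x = cell n x"
proof (intro equalityI subsetI)
  fix y assume "y \<in> connected_component_set (complement A n) x"
  then obtain T where T: "connected T" "T \<subseteq> complement A n" "x \<in> T" "y \<in> T"
    unfolding connected_component_def by auto
  have "pattern {..<n} y = pattern {..<n} x"
    using pattern_const_on_connected[OF T(1,2,3,4)] pattern_const_on_connected[OF T(1,2,4,3)]
    unfolding pattern_def by blast
  then show "y \<in> cell n x" unfolding cell_def using T by auto
next
  fix y assume y: "y \<in> cell n x"
  have "x \<in> cell n x" using x unfolding cell_def by simp
  define g where "g = (\<lambda>t::real. \<lambda>i. (1 - t) * x i + t * y i)"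
  have "continuous_on {0..1} g" unfolding g_def
    by (rule continuous_on_coordinatewise_then_product) (intro continuous_intros)
  then have "connected (g ` {0..1})" by (rule connected_continuous_image[OF _ connected_Icc])
  moreover have "g ` {0..1} \<subseteq> complement A n"
    using segment_in_cell[OF \<open>x \<in> cell n x\<close> y] unfolding g_def cell_def by auto
  moreover have "x \<in> g ` {0..1}" by (rule image_eqI[of _ _ 0]) (auto simp: g_def)
  moreover have "y \<in> g ` {0..1}" by (rule image_eqI[of _ _ 1]) (auto simp: g_def)
  ultimately show "y \<in> connected_component_set (complement A n) x"
    unfolding connected_component_def by blast
qed

lemma spread_top_block:
  assumes fin: "finite J" and ne: "J \<noteq> {}" and ij: "i \<in> top_block z J" "j \<in> top_block z J"
  shows "z i - z j \<le> card (top_block z J) * b"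
proof -
  let ?T = "top_block z J"
  note T = top_block_props[OF fin ne, where x = z]
  have step: "\<exists>k\<in>?T. z k < z i' \<and> z i' - z k \<le> b" if i': "i' \<in> ?T" "z j < z i'" for i'
  proof (rule ccontr)
    assume no_step: "\<not> ?thesis"
    \<comment> \<open>otherwise the values \<open>\<ge> z i'\<close> would form a smaller separated set\<close>
    define U where "U = {k \<in> ?T. z i' \<le> z k}"
    have "U \<subseteq> J" "U \<noteq> {}" using T(1) i'(1) unfolding U_def by auto
    moreover have "separated z J U" unfolding separated_def
    proof (intro ballI)
      fix u v assume uv: "u \<in> U" "v \<in> J - U"
      show "z u - z v > b"
      proof (cases "v \<in> ?T")
        case True
        then have "z v < z i'" "\<not> z i' - z v \<le> b" using uv no_step unfolding U_def by auto
        then show ?thesis using uv unfolding U_def by auto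
      next
        case False
        then show ?thesis using T(3) uv unfolding separated_def U_def by blast
      qed
    qed
    ultimately have "?T \<subseteq> U" by (rule T(4))
    then show False using ij(2) i'(2) unfolding U_def by auto
  qed
  show ?thesis
    using diff_le_card_mult_of_small_steps[OF finite_subset[OF T(1) fin] _ ij(1) step] b_pos by simp
qed

lemma shift_remaining_in_cell:
  assumes x: "x \<in> complement A n" and s: "s \<ge> 0"
  shows "(\<lambda>i. x i - s * indicator (remaining x {..<n} m) i) \<in> cell n x"
proof -
  let ?R = "remaining x {..<n} m"
  let ?z = "\<lambda>i. x i - s * indicator ?R i"
  have gx: "generic {..<n} x" using x unfolding complement_eq by auto
  have key: "(?z i - ?z j > a \<longleftrightarrow> x i - x j > a) \<and> ?z i - ?z j \<noteq> a"
    if ij: "i < n" "j < n" "i \<noteq> j" and a: "a \<in> A" for i j a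
  proof -
    have "x i - x j \<noteq> a" using gx ij a unfolding generic_def by auto
    consider "i \<in> ?R \<longleftrightarrow> j \<in> ?R" | "i \<notin> ?R" "j \<in> ?R" | "i \<in> ?R" "j \<notin> ?R" by blast
    then show ?thesis
    proof cases
      case 1
      then have e: "?z i - ?z j = x i - x j" by (cases "j \<in> ?R") auto
      show ?thesis unfolding e using \<open>x i - x j \<noteq> a\<close> by simp
    next
      case 2
      \<comment> \<open>pushing the lower part further down keeps every comparison that exceeds \<open>b\<close>\<close>
      have "x i - x j > b" using above_remaining[of "{..<n}" i x m j] 2 ij by auto
      then show ?thesis using 2 s A_bounds[OF a] by auto
    next
      case 3
      have "x j - x i > b" using above_remaining[of "{..<n}" j x m i] 3 ij by auto
      then show ?thesis using 3 s A_bounds[OF a] by auto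
    qed
  qed
  have "?z \<in> Rn n"
    using x remaining_subset[of x "{..<n}" m] unfolding complement_eq Rn_def by (auto simp: indicator_def)
  moreover have "generic {..<n} ?z" using key unfolding generic_def by blast
  moreover have "pattern {..<n} ?z = pattern {..<n} x" using key unfolding pattern_def by auto
  ultimately show ?thesis unfolding cell_def complement_eq by auto
qed

context
  fixes n k :: nat and x :: "nat \<Rightarrow> real"
  assumes x_complement: "x \<in> complement A n" and num_blocks_x: "num_blocks x {..<n} = k"
begin

abbreviation block :: "nat \<Rightarrow> nat set" where
  "block m \<equiv> top_block x (remaining x {..<n} m)"

lemma block_props:
  assumes "m < k"
  shows "block m \<noteq> {}" "block m \<subseteq> remaining x {..<n} m" "block m \<subseteq> {..<n}"
proof -
  have "remaining x {..<n} m \<noteq> {}" using remaining_nonempty[of m x] assms num_blocks_x by simp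
  note T = top_block_props[OF finite_remaining[OF finite_lessThan] this, where x = x]
  show "block m \<noteq> {}" by (rule T(2))
  show "block m \<subseteq> remaining x {..<n} m" by (rule T(1))
  then show "block m \<subseteq> {..<n}" using remaining_subset[of x "{..<n}" m] by blast
qed

lemma blocks_disjoint:
  assumes "m < k" "m' < k" "m \<noteq> m'"
  shows "block m \<inter> block m' = {}"
proof -
  have main: "block m1 \<inter> block m2 = {}" if "m1 < m2" "m2 < k" for m1 m2
  proof -
    have "block m2 \<subseteq> remaining x {..<n} (Suc m1)"
      using block_props(2)[OF that(2)] remaining_antimono[of "Suc m1" m2 x "{..<n}"] that(1) by simp
    then show ?thesis by auto
  qed
  show ?thesis
  proof (cases "m < m'")
    case True
    from main[OF True assms(2)] show ?thesis .
  next
    case False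
    then have "m' < m" using assms(3) by simp
    from main[OF this assms(1)] show ?thesis by (simp add: Int_commute)
  qed
qed

lemma block_cover:
  assumes "i < n"
  obtains m where "m < k" "i \<in> block m"
proof -
  have "i \<notin> remaining x {..<n} k" using remaining_num_blocks[of "{..<n}" x] num_blocks_x by simp
  moreover have "\<not> i \<notin> remaining x {..<n} 0" using assms by simp
  ultimately obtain m where "m < k" "\<forall>j\<le>m. i \<in> remaining x {..<n} j"
      "i \<notin> remaining x {..<n} (Suc m)"
    using ex_least_nat_less[of "\<lambda>m. i \<notin> remaining x {..<n} m" k] by blast
  then show ?thesis by (intro that[of m]) auto
qed

lemma cell_same_blocks:
  assumes "z \<in> cell n x"
  shows "top_block z (remaining x {..<n} m) = block m"
proof -
  have "pattern {..<n} z = pattern {..<n} x" using assms unfolding cell_def by simp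
  then show ?thesis by (rule top_block_cong_pattern[OF _ remaining_subset])
qed

lemma lincomb_block_indicators:
  assumes "m < k" "i \<in> block m"
  shows "lincomb k (\<lambda>m. indicator (block m)) c i = c m"
proof -
  have "c m' * indicator (block m') i = (if m' = m then c m else 0)" if "m' < k" for m'
  proof (cases "m' = m")
    case False
    then have "i \<notin> block m'" using blocks_disjoint[OF assms(1) that] assms(2) by blast
    then show ?thesis using False by simp
  qed (use assms(2) in simp)
  then have "lincomb k (\<lambda>m. indicator (block m)) c i = (\<Sum>m'<k. if m' = m then c m else 0)"
    unfolding lincomb_def by (intro sum.cong) simp_all
  then show ?thesis using assms(1) by simp
qed

lemma block_indicators_independent:
  assumes "\<And>i. i < n \<Longrightarrow> lincomb k (\<lambda>m. indicator (block m)) c i = 0" "m < k"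
  shows "c m = 0"
proof -
  obtain i where i: "i \<in> block m" using block_props(1)[OF assms(2)] by blast
  then have "i < n" using block_props(3)[OF assms(2)] by blast
  then show ?thesis using lincomb_block_indicators[OF assms(2) i, of c] assms(1) by simp
qed

lemma subspace_dim_block_span: "is_subspace_dim n k (range (lincomb k (\<lambda>m. indicator (block m))))"
  unfolding is_subspace_dim_def
proof (intro exI conjI)
  show "\<forall>m<k. indicator (block m) \<in> Rn n"
  proof (intro allI impI)
    fix m assume "m < k"
    then show "indicator (block m) \<in> Rn n"
      using block_props(3)[of m] unfolding Rn_def by (auto simp: indicator_def)
  qed
  show "\<forall>c. lincomb k (\<lambda>m. indicator (block m)) c = (\<lambda>_. 0) \<longrightarrow> (\<forall>m<k. c m = 0)"
  proof (intro allI impI)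
    fix c m assume c: "lincomb k (\<lambda>m. indicator (block m)) c = (\<lambda>_. 0)" and "m < k"
    show "c m = 0" by (rule block_indicators_independent[OF _ \<open>m < k\<close>]) (simp add: c)
  qed
qed simp

lemma cell_near_block_span:
  obtains r where "r > 0" "\<forall>z\<in>cell n x. \<exists>w\<in>range (lincomb k (\<lambda>m. indicator (block m))). edist n z w \<le> r"
proof -
  define p where "p m = (SOME i. i \<in> block m)" for m
  have p: "p m \<in> block m" if "m < k" for m
    unfolding p_def using block_props(1)[OF that] by (simp add: some_in_eq)
  define D where "D = real n * b"
  have bound: "edist n z (lincomb k (\<lambda>m. indicator (block m)) (\<lambda>m. z (p m))) \<le> sqrt (real n * D^2)"
    if z: "z \<in> cell n x" for z
  proof -
    let ?w = "lincomb k (\<lambda>m. indicator (block m)) (\<lambda>m. z (p m))"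
    have close: "\<bar>z i - ?w i\<bar> \<le> \<bar>D\<bar>" if i: "i < n" for i
    proof -
      obtain m where m: "m < k" "i \<in> block m" using block_cover[OF i] .
      have ne: "remaining x {..<n} m \<noteq> {}" using remaining_nonempty[of m x] m(1) num_blocks_x by simp
      have "\<bar>z i - z (p m)\<bar> \<le> card (block m) * b"
        using spread_top_block[OF finite_remaining[OF finite_lessThan] ne, of i z "p m"]
          spread_top_block[OF finite_remaining[OF finite_lessThan] ne, of "p m" z i]
          m(2) p[OF m(1)] cell_same_blocks[OF z] by (simp add: abs_le_iff)
      also have "\<dots> \<le> \<bar>D\<bar>"
        unfolding D_def using card_mono[OF finite_lessThan block_props(3)[OF m(1)]] b_pos by simp
      finally show ?thesis using lincomb_block_indicators[OF m] by simp
    qed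
    have "(\<Sum>i<n. (z i - ?w i)^2) \<le> (\<Sum>i<n. D^2)"
      by (rule sum_mono) (simp add: close abs_le_square_iff[symmetric])
    then show ?thesis unfolding edist_def by (simp add: real_sqrt_le_mono)
  qed
  show ?thesis
  proof (rule that)
    show "sqrt (real n * D^2) + 1 > 0" by (simp add: add_nonneg_pos)
    show "\<forall>z\<in>cell n x. \<exists>w\<in>range (lincomb k (\<lambda>m. indicator (block m))). edist n z w \<le> sqrt (real n * D^2) + 1"
    proof
      fix z assume "z \<in> cell n x"
      then show "\<exists>w\<in>range (lincomb k (\<lambda>m. indicator (block m))). edist n z w \<le> sqrt (real n * D^2) + 1"
        using bound by (intro bexI[where x = "lincomb k (\<lambda>m. indicator (block m)) (\<lambda>m. z (p m))"]) force+
    qed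
  qed
qed

lemma dot_tail_indicator_eq_0:
  assumes near: "\<forall>z\<in>cell n x. \<exists>w\<in>W. edist n z w \<le> r"
    and orth: "\<And>w. w \<in> W \<Longrightarrow> dot n u w = 0"
  shows "dot n u (indicator (remaining x {..<n} m)) = 0"
proof (rule bounded_on_ray_imp_zero[where \<beta> = "dot n u x" and C = "(\<Sum>t<n. \<bar>u t\<bar>) * r"])
  fix s :: real assume "s \<ge> 0"
  let ?t = "indicator (remaining x {..<n} m) :: nat \<Rightarrow> real"
  let ?z = "\<lambda>i. x i - s * ?t i"
  \<comment> \<open>\<open>dot n u\<close> vanishes on \<open>W\<close>, so it is bounded on the cell, which contains the ray \<open>?z\<close>\<close>
  obtain w where w: "w \<in> W" "edist n ?z w \<le> r"
    using near shift_remaining_in_cell[OF x_complement \<open>s \<ge> 0\<close>] by blast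
  have "dot n u ?z = dot n u x - s * dot n u ?t"
    by (simp only: dot_diff dot_scale)
  moreover have "\<bar>dot n u ?z - dot n u w\<bar> \<le> (\<Sum>t<n. \<bar>u t\<bar>) * r"
    using abs_dot_diff_le[of n u ?z w] w(2)
    by (meson order_trans mult_left_mono sum_nonneg abs_ge_zero)
  ultimately show "\<bar>dot n u x - s * dot n u ?t\<bar> \<le> (\<Sum>t<n. \<bar>u t\<bar>) * r"
    using orth[OF w(1)] by simp
qed

lemma cell_not_near_small_subspace:
  assumes "l < k" and W: "is_subspace_dim n l W"
  shows "\<not> (\<forall>z\<in>cell n x. \<exists>w\<in>W. edist n z w \<le> r)"
proof
  assume near: "\<forall>z\<in>cell n x. \<exists>w\<in>W. edist n z w \<le> r"
  obtain v where v: "W = range (lincomb l v)" using W unfolding is_subspace_dim_def by blast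
  let ?g = "\<lambda>m. indicator (block m) :: nat \<Rightarrow> real"
  let ?t = "\<lambda>m. indicator (remaining x {..<n} m) :: nat \<Rightarrow> real"
  \<comment> \<open>more blocks than dimensions: some nonzero combination of block indicators is orthogonal to \<open>W\<close>\<close>
  obtain c where c: "\<exists>m\<in>{..<k}. c m \<noteq> 0" "\<forall>j<l. (\<Sum>m\<in>{..<k}. dot n (v j) (?g m) * c m) = 0"
    using homogeneous_system_nonzero_solution[of "{..<k}" l "\<lambda>j m. dot n (v j) (?g m)"] assms(1)
    by auto
  define u where "u = lincomb k ?g c"
  have u_W: "dot n u w = 0" if w: "w \<in> W" for w
  proof -
    obtain d where w: "w = lincomb l v d" using w v by blast
    have "dot n u (v j) = 0" if "j < l" for j
    proof -
      have "dot n (v j) u = (\<Sum>m<k. c m * dot n (v j) (?g m))" unfolding u_def by (rule dot_lincomb)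
      then show ?thesis using c(2) that dot_commute[of n u "v j"] by (simp add: mult.commute)
    qed
    then show ?thesis unfolding w dot_lincomb by simp
  qed
  have u_t: "dot n u (?t m) = 0" for m
    using dot_tail_indicator_eq_0[OF near u_W] .
  have "dot n u (?g m) = 0" if "m < k" for m
  proof -
    have "?g m = (\<lambda>i. ?t m i - ?t (Suc m) i)"
      using block_props(2)[OF that] by (intro ext) (auto simp: indicator_def)
    then show ?thesis using u_t[of m] u_t[of "Suc m"] by (simp only: dot_diff)
  qed
  then have "dot n u u = 0" using dot_lincomb[of n u k ?g c] unfolding u_def[symmetric] by simp
  then have "c m = 0" if "m < k" for m
    using block_indicators_independent[OF _ that] dot_self_eq_0 unfolding u_def by blast
  then show False using c(1) by auto
qed

lemma level_cell: "level n (cell n x) = k"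
  unfolding level_def
proof (rule Least_equality)
  obtain r where "r > 0" "\<forall>z\<in>cell n x. \<exists>w\<in>range (lincomb k (\<lambda>m. indicator (block m))). edist n z w \<le> r"
    by (rule cell_near_block_span)
  then show "\<exists>W r. is_subspace_dim n k W \<and> r > 0 \<and> (\<forall>z\<in>cell n x. \<exists>w\<in>W. edist n z w \<le> r)"
    using subspace_dim_block_span by blast
next
  fix l assume "\<exists>W r. is_subspace_dim n l W \<and> r > 0 \<and> (\<forall>z\<in>cell n x. \<exists>w\<in>W. edist n z w \<le> r)"
  then show "k \<le> l" using cell_not_near_small_subspace by (meson not_le)
qed

end

lemma r_level_eq_num_patterns: "r_level A l n = num_patterns l n"
proof -
  let ?I = "{..<n}"
  define extend where "extend y = (\<lambda>i. if i < n then y i else 0)" for y :: "nat \<Rightarrow> real"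
  have extend: "extend y \<in> complement A n" "pattern ?I (extend y) = pattern ?I y" if "generic ?I y" for y
  proof -
    show "pattern ?I (extend y) = pattern ?I y" by (rule pattern_cong) (simp add: extend_def)
    show "extend y \<in> complement A n"
      using that unfolding complement_eq generic_def Rn_def extend_def by auto
  qed
  define cell_of where "cell_of p = {y \<in> complement A n. pattern ?I y = p}" for p
  have cell_of: "cell_of (pattern ?I y) = cell n y" for y unfolding cell_of_def cell_def ..
  have "{R \<in> regions A n. level n R = l} = cell_of ` patterns ?I l"
  proof (intro equalityI subsetI)
    fix R assume "R \<in> {R \<in> regions A n. level n R = l}"
    then obtain x where x: "x \<in> complement A n" "R = cell n x" "level n R = l"
      unfolding regions_def using connected_component_complement_eq_cell by auto
    then have "generic ?I x" "num_blocks x ?I = l" using level_cell[OF x(1) refl] unfolding complement_eq by auto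
    then show "R \<in> cell_of ` patterns ?I l" unfolding patterns_def x(2) cell_of[symmetric] by blast
  next
    fix R assume "R \<in> cell_of ` patterns ?I l"
    then obtain y where y: "R = cell_of (pattern ?I y)" "generic ?I y" "num_blocks y ?I = l"
      unfolding patterns_def by blast
    note e = extend[OF y(2)]
    have R: "R = cell n (extend y)" using y(1) e(2) cell_of by metis
    have "num_blocks (extend y) ?I = l" using num_blocks_cong_pattern[OF e(2)] y(3) by simp
    then show "R \<in> {R \<in> regions A n. level n R = l}"
      unfolding regions_def R using connected_component_complement_eq_cell[OF e(1)] e(1)
        level_cell[OF e(1)] by auto
  qed
  moreover have "inj_on cell_of (patterns ?I l)"
  proof (rule inj_onI)
    fix p p' assume p: "p \<in> patterns ?I l" and eq: "cell_of p = cell_of p'"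
    obtain y where y: "p = pattern ?I y" "generic ?I y" using p unfolding patterns_def by blast
    have "extend y \<in> cell_of p" unfolding cell_of_def using extend[OF y(2)] y(1) by simp
    then have "extend y \<in> cell_of p'" using eq by simp
    then show "p = p'" unfolding cell_of_def using extend[OF y(2)] y(1) by simp
  qed
  ultimately show ?thesis unfolding r_level_def num_patterns_def by (simp add: card_image)
qed

lemma Fstar_power: "Fstar A l = Fstar A 1 ^ l"
  unfolding Fstar_def r_level_eq_num_patterns by (rule egf_num_patterns)

end

theorem theorem1p3:
  fixes A :: "real set" and l :: nat
  assumes "finite A" and "A \<noteq> {}" and "\<forall>a\<in>A. a > 0"
  shows "Fstar A l = (Fstar A 1) ^ l"
proof -
  interpret semiorder_data A "Max A"
    using assms by unfold_locales auto
  show ?thesis by (rule Fstar_power)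
qed

end
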